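(* Let $\lambda\neq0$ be a constant and let $\phi(x,t)$ be a smooth function with $\phi_x\neq0$ satisfying $\{\phi;x\}_t+\frac4\lambda\big(\frac{\phi_t}{\phi_x}\big)_x=0$. Let $p=\frac{\phi_t}{\lambda\phi_x}$, $U=\frac12\{\phi;x\}+\frac1\lambda$, let $A,B$ be constants not both zero, and let $V=\frac{A\phi+B}{\sqrt{\phi_x}}$ on a region where $A\phi+B\neq0$. Define $$\widetilde U=U+2(\log V)_{xx},\qquad \widetilde p=\frac{\phi_t}{\lambda\phi_x}-\Big(\log\frac{A\phi+B}{\sqrt{\phi_x}}\Big)_{xt}.$$ Then $1/V$ solves the system $$W_{xx}+\Big(\widetilde U-\frac1\lambda\Big)W=0,\qquad W_t=\lambda\Big(\widetilde pW_x-\frac12\widetilde p_xW\Big).$$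
   Context: The Schwarzian derivative of a function $\phi(x,t)$ with $\phi_x\neq0$ is $\{\phi;x\}=\frac{\phi_{xxx}}{\phi_x}-\frac32\frac{\phi_{xx}^2}{\phi_x^2}$. All functions are smooth. *)

theory Defs
  imports "HOL-Analysis.Analysis"
begin

definition dx :: "(real \<times> real \<Rightarrow> real) \<Rightarrow> real \<times> real \<Rightarrow> real" where
  "dx f = (\<lambda>(x, t). deriv (\<lambda>y. f (y, t)) x)"

definition dt :: "(real \<times> real \<Rightarrow> real) \<Rightarrow> real \<times> real \<Rightarrow> real" where
  "dt f = (\<lambda>(x, t). deriv (\<lambda>s. f (x, s)) t)"

text \<open>Iterated partial derivative: True = d/dx, False = d/dt (applied right to left).\<close>
fun pd :: "bool list \<Rightarrow> (real \<times> real \<Rightarrow> real) \<Rightarrow> real \<times> real \<Rightarrow> real" where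
  "pd [] f = f"
| "pd (b # bs) f = (if b then dx else dt) (pd bs f)"

definition smooth_on :: "(real \<times> real) set \<Rightarrow> (real \<times> real \<Rightarrow> real) \<Rightarrow> bool" where
  "smooth_on S f \<longleftrightarrow> open S \<and> (\<forall>ws. pd ws f differentiable_on S)"

definition schwarzian :: "(real \<times> real \<Rightarrow> real) \<Rightarrow> real \<times> real \<Rightarrow> real" where
  "schwarzian \<phi> = (\<lambda>z. dx (dx (dx \<phi>)) z / dx \<phi> z - 3/2 * (dx (dx \<phi>) z / dx \<phi> z)^2)"

end

(*
  V = (A phi + B) / sqrt phi_x is the classical eigenfunction of the Lax pair of phi itself:
  Moebius invariance of the Schwarzian gives V_xx + {phi;x} V / 2 = 0, i.e. the Riccati identity
  r_x + r^2 = - {phi;x} / 2 for r = (log V)_x, and V_t = lambda (p V_x - p_x V / 2) holds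
  identically.
  For W = 1/V one has W_x = - r W and W_xx = (r^2 - r_x) W, which is the transformed spatial
  equation.  For the time equation, differentiate the Riccati identity in t; after commuting
  the mixed partials of r, what remains is exactly the PDE {phi;x}_t + 4/lambda (phi_t/phi_x)_x = 0.
  Mixed partials commute because both are limits of the same second difference quotient.
*)
theory Submission
  imports Defs
begin

lemma has_derivative_imp_x_line:
  assumes "(f has_derivative D) (at (x, t))"
  shows "((\<lambda>y. f (y, t)) has_real_derivative D (1, 0)) (at x)"
proof -
  have "((\<lambda>y. (y, t)) has_derivative (\<lambda>h. (h, 0))) (at x)"
    by (auto intro!: derivative_eq_intros)
  from has_derivative_compose[OF this assms]
  have "((\<lambda>y. f (y, t)) has_derivative (\<lambda>h. D (h, 0))) (at x)" by simp
  moreover have "(\<lambda>h. D (h, 0)) = (*) (D (1, 0))"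
  proof
    fix h :: real
    have "D (h, 0) = D (h *\<^sub>R (1, 0))" by simp
    also have "\<dots> = h *\<^sub>R D (1, 0)"
      by (rule linear_cmul[OF bounded_linear.linear[OF has_derivative_bounded_linear[OF assms]]])
    finally show "D (h, 0) = D (1, 0) * h" by simp
  qed
  ultimately show ?thesis by (simp add: has_field_derivative_def)
qed

lemma has_derivative_imp_t_line:
  assumes "(f has_derivative D) (at (x, t))"
  shows "((\<lambda>s. f (x, s)) has_real_derivative D (0, 1)) (at t)"
proof -
  have "((\<lambda>s. (x, s)) has_derivative (\<lambda>h. (0, h))) (at t)"
    by (auto intro!: derivative_eq_intros)
  from has_derivative_compose[OF this assms]
  have "((\<lambda>s. f (x, s)) has_derivative (\<lambda>h. D (0, h))) (at t)" by simp
  moreover have "(\<lambda>h. D (0, h)) = (*) (D (0, 1))"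
  proof
    fix h :: real
    have "D (0, h) = D (h *\<^sub>R (0, 1))" by simp
    also have "\<dots> = h *\<^sub>R D (0, 1)"
      by (rule linear_cmul[OF bounded_linear.linear[OF has_derivative_bounded_linear[OF assms]]])
    finally show "D (0, h) = D (0, 1) * h" by simp
  qed
  ultimately show ?thesis by (simp add: has_field_derivative_def)
qed

lemma dx_eqI: "((\<lambda>y. f (y, t)) has_real_derivative D) (at x) \<Longrightarrow> dx f (x, t) = D"
  by (simp add: dx_def DERIV_imp_deriv)

lemma dt_eqI: "((\<lambda>s. f (x, s)) has_real_derivative D) (at t) \<Longrightarrow> dt f (x, t) = D"
  by (simp add: dt_def DERIV_imp_deriv)

lemma differentiable_imp_x_line:
  assumes "f differentiable (at (x, t))"
  shows "((\<lambda>y. f (y, t)) has_real_derivative dx f (x, t)) (at x)"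
proof -
  obtain D where "(f has_derivative D) (at (x, t))"
    using assms by (auto simp: differentiable_def)
  with has_derivative_imp_x_line dx_eqI show ?thesis by metis
qed

lemma differentiable_imp_t_line:
  assumes "f differentiable (at (x, t))"
  shows "((\<lambda>s. f (x, s)) has_real_derivative dt f (x, t)) (at t)"
proof -
  obtain D where "(f has_derivative D) (at (x, t))"
    using assms by (auto simp: differentiable_def)
  with has_derivative_imp_t_line dt_eqI show ?thesis by metis
qed

lemma dx_cong_open:
  assumes "open N" "(x, t) \<in> N" "\<And>z. z \<in> N \<Longrightarrow> f z = g z"
  shows "dx f (x, t) = dx g (x, t)"
proof -
  have "open ((\<lambda>y. (y, t)) -` N)"
    by (rule open_vimage[OF assms(1)]) (auto intro!: continuous_intros)
  then have "eventually (\<lambda>y. y \<in> (\<lambda>y. (y, t)) -` N) (nhds x)"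
    using assms(2) by (intro eventually_nhds_in_open) auto
  then have "eventually (\<lambda>y. f (y, t) = g (y, t)) (nhds x)"
    by (rule eventually_mono) (use assms(3) in auto)
  then show ?thesis by (simp add: dx_def deriv_cong_ev)
qed

lemma dt_cong_open:
  assumes "open N" "(x, t) \<in> N" "\<And>z. z \<in> N \<Longrightarrow> f z = g z"
  shows "dt f (x, t) = dt g (x, t)"
proof -
  have "open ((\<lambda>s. (x, s)) -` N)"
    by (rule open_vimage[OF assms(1)]) (auto intro!: continuous_intros)
  then have "eventually (\<lambda>s. s \<in> (\<lambda>s. (x, s)) -` N) (nhds t)"
    using assms(2) by (intro eventually_nhds_in_open) auto
  then have "eventually (\<lambda>s. f (x, s) = g (x, s)) (nhds t)"
    by (rule eventually_mono) (use assms(3) in auto)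
  then show ?thesis by (simp add: dt_def deriv_cong_ev)
qed

lemma dx_comp_swap: "dx (f \<circ> prod.swap) = dt f \<circ> prod.swap"
  by (simp add: fun_eq_iff dx_def dt_def)

lemma dt_comp_swap: "dt (f \<circ> prod.swap) = dx f \<circ> prod.swap"
  by (simp add: fun_eq_iff dx_def dt_def)

lemma differentiable_transform_open:
  assumes "open N" "z \<in> N" "\<And>w. w \<in> N \<Longrightarrow> f w = g w" "f differentiable (at z)"
  shows "g differentiable (at z)"
proof -
  obtain D where "(f has_derivative D) (at z)"
    using assms(4) by (auto simp: differentiable_def)
  from has_derivative_transform_within_open[OF this assms(1-3)] show ?thesis
    by (auto simp: differentiable_def)
qed


definition second_difference :: "(real \<times> real \<Rightarrow> real) \<Rightarrow> real \<Rightarrow> real \<Rightarrow> real \<Rightarrow> real"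
  where "second_difference f a b h = f (a + h, b + h) - f (a + h, b) - f (a, b + h) + f (a, b)"

lemma second_difference_comp_swap:
  "second_difference (f \<circ> prod.swap) b a h = second_difference f a b h"
  by (simp add: second_difference_def)

lemma second_difference_mvt:
  fixes f :: "real \<times> real \<Rightarrow> real"
  assumes "h > 0"
    and "\<And>y s. a \<le> y \<Longrightarrow> y \<le> a + h \<Longrightarrow> s \<in> {b, b + h} \<Longrightarrow> f differentiable (at (y, s))"
  shows "\<exists>\<xi>. a < \<xi> \<and> \<xi> < a + h \<and> second_difference f a b h = h * (dx f (\<xi>, b + h) - dx f (\<xi>, b))"
proof -
  have "\<exists>\<xi>. a < \<xi> \<and> \<xi> < a + h \<and>
      (f (a + h, b + h) - f (a + h, b)) - (f (a, b + h) - f (a, b))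
        = (a + h - a) * (dx f (\<xi>, b + h) - dx f (\<xi>, b))"
    by (rule MVT2[where f = "\<lambda>y. f (y, b + h) - f (y, b)"])
      (use assms in \<open>auto intro!: DERIV_diff differentiable_imp_x_line\<close>)
  then show ?thesis by (auto simp: second_difference_def algebra_simps)
qed

lemma second_difference_quotient_bound:
  fixes f D :: "real \<times> real \<Rightarrow> real"
  assumes "h > 0" and "linear D" and "e \<ge> 0"
    and diff: "\<And>z. norm (z - (a, b)) \<le> 2 * h \<Longrightarrow> f differentiable (at z)"
    and approx: "\<And>z. norm (z - (a, b)) \<le> 2 * h \<Longrightarrow>
      \<bar>dx f z - dx f (a, b) - D (z - (a, b))\<bar> \<le> e * norm (z - (a, b))"
  shows "\<bar>second_difference f a b h / h\<^sup>2 - D (0, 1)\<bar> \<le> 4 * e"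
proof -
  have near: "norm ((y, s) - (a, b)) \<le> 2 * h" if "a \<le> y" "y \<le> a + h" "s \<in> {b, b + h}" for y s
  proof -
    have "norm ((y, s) - (a, b)) \<le> \<bar>y - a\<bar> + \<bar>s - b\<bar>"
      using norm_Pair_le[of "y - a" "s - b"] by simp
    then show ?thesis using that \<open>h > 0\<close> by auto
  qed
  then obtain \<xi> where \<xi>: "a < \<xi>" "\<xi> < a + h"
    and mvt: "second_difference f a b h = h * (dx f (\<xi>, b + h) - dx f (\<xi>, b))"
    using second_difference_mvt[OF \<open>h > 0\<close>] diff by blast
  define err where "err s = dx f (\<xi>, s) - dx f (a, b) - D ((\<xi>, s) - (a, b))" for s
  have err_bound: "\<bar>err s\<bar> \<le> 2 * e * h" if "s \<in> {b, b + h}" for s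
  proof -
    have "norm ((\<xi>, s) - (a, b)) \<le> 2 * h" using near[of \<xi> s] \<xi> that by auto
    then have "\<bar>err s\<bar> \<le> e * norm ((\<xi>, s) - (a, b))" unfolding err_def by (rule approx)
    also have "\<dots> \<le> e * (2 * h)"
      using \<open>norm ((\<xi>, s) - (a, b)) \<le> 2 * h\<close> \<open>e \<ge> 0\<close> by (rule mult_left_mono)
    finally show ?thesis by simp
  qed
  have "D ((\<xi>, b + h) - (a, b)) - D ((\<xi>, b) - (a, b)) = h * D (0, 1)"
    using linear_diff[OF \<open>linear D\<close>, of "(\<xi> - a, h)" "(\<xi> - a, 0)"]
      linear_cmul[OF \<open>linear D\<close>, of h "(0, 1)"]
    by simp
  then have "dx f (\<xi>, b + h) - dx f (\<xi>, b) - h * D (0, 1) = err (b + h) - err b"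
    by (simp add: err_def)
  then have "\<bar>dx f (\<xi>, b + h) - dx f (\<xi>, b) - h * D (0, 1)\<bar> \<le> 4 * e * h"
    using err_bound[of b] err_bound[of "b + h"] abs_triangle_ineq4[of "err (b + h)" "err b"]
    by simp
  moreover have "second_difference f a b h / h\<^sup>2 - D (0, 1)
      = (dx f (\<xi>, b + h) - dx f (\<xi>, b) - h * D (0, 1)) / h"
    unfolding mvt using \<open>h > 0\<close> by (simp add: field_simps power2_eq_square)
  ultimately show ?thesis
    using \<open>h > 0\<close> by (simp add: pos_divide_le_eq)
qed

lemma second_difference_tendsto_dt_dx:
  fixes f :: "real \<times> real \<Rightarrow> real"
  assumes S: "open S" "(a, b) \<in> S" and f: "f differentiable_on S"
    and fx: "dx f differentiable (at (a, b))"
  shows "((\<lambda>h. second_difference f a b h / h\<^sup>2) \<longlongrightarrow> dt (dx f) (a, b)) (at_right 0)"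
proof -
  obtain D where D: "(dx f has_derivative D) (at (a, b))"
    using fx by (auto simp: differentiable_def)
  have "dt (dx f) (a, b) = D (0, 1)"
    using has_derivative_imp_t_line[OF D] dt_eqI by metis
  moreover obtain r where r: "r > 0" "ball (a, b) r \<subseteq> S"
    using S open_contains_ball by blast
  have "((\<lambda>h. second_difference f a b h / h\<^sup>2) \<longlongrightarrow> D (0, 1)) (at_right 0)"
  proof (rule tendstoI)
    fix \<epsilon> :: real assume "\<epsilon> > 0"
    then obtain d where "d > 0" and approx: "\<And>z. norm (z - (a, b)) < d \<Longrightarrow>
        norm (dx f z - dx f (a, b) - D (z - (a, b))) \<le> \<epsilon> / 8 * norm (z - (a, b))"
      using D unfolding has_derivative_within_alt by (meson divide_pos_pos zero_less_numeral UNIV_I)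
    have "eventually (\<lambda>h. h \<in> {0<..<min d r / 2}) (at_right 0)"
      using \<open>d > 0\<close> r(1) by (intro eventually_at_right_real) auto
    then show "eventually (\<lambda>h. dist (second_difference f a b h / h\<^sup>2) (D (0, 1)) < \<epsilon>) (at_right 0)"
    proof (rule eventually_mono)
      fix h :: real assume h: "h \<in> {0<..<min d r / 2}"
      have "f differentiable (at z)" if "norm (z - (a, b)) \<le> 2 * h" for z
      proof -
        have "z \<in> ball (a, b) r"
          using that h norm_minus_commute[of "(a, b)" z] by (simp add: dist_norm)
        then show ?thesis using f S(1) r(2) by (auto simp: differentiable_on_eq_differentiable_at)
      qed
      moreover have "linear D"
        by (rule bounded_linear.linear[OF has_derivative_bounded_linear[OF D]])
      ultimately have "\<bar>second_difference f a b h / h\<^sup>2 - D (0, 1)\<bar> \<le> 4 * (\<epsilon> / 8)"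
        using h approx \<open>\<epsilon> > 0\<close> by (intro second_difference_quotient_bound) auto
      then show "dist (second_difference f a b h / h\<^sup>2) (D (0, 1)) < \<epsilon>"
        using \<open>\<epsilon> > 0\<close> by (simp add: dist_real_def)
    qed
  qed
  ultimately show ?thesis by simp
qed

lemma dt_dx_eq_dx_dt:
  fixes f :: "real \<times> real \<Rightarrow> real"
  assumes S: "open S" "(a, b) \<in> S" and f: "f differentiable_on S"
    and "dx f differentiable (at (a, b))" and "dt f differentiable (at (a, b))"
  shows "dt (dx f) (a, b) = dx (dt f) (a, b)"
proof -
  let ?g = "f \<circ> prod.swap" and ?S = "prod.swap -` S"
  have swap: "prod.swap differentiable (at z)" for z :: "real \<times> real"
  proof -
    have "bounded_linear (\<lambda>z :: real \<times> real. (snd z, fst z))"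
      by (intro bounded_linear_Pair bounded_linear_snd bounded_linear_fst)
    moreover have "prod.swap = (\<lambda>z :: real \<times> real. (snd z, fst z))"
      by (rule ext) (simp add: prod.swap_def)
    ultimately show ?thesis by (simp add: bounded_linear_imp_differentiable)
  qed
  have "open ?S" using S(1) by (intro open_vimage) (auto intro!: continuous_intros)
  moreover have "(b, a) \<in> ?S" using S(2) by simp
  moreover have "?g differentiable_on ?S"
    using f S(1) swap by (auto simp: differentiable_on_eq_differentiable_at \<open>open ?S\<close>
        intro!: differentiable_chain_at)
  moreover have "dx ?g differentiable (at (b, a))"
    unfolding dx_comp_swap using assms(5) swap by (auto intro!: differentiable_chain_at)
  ultimately have "((\<lambda>h. second_difference ?g b a h / h\<^sup>2) \<longlongrightarrow> dt (dx ?g) (b, a)) (at_right 0)"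
    by (rule second_difference_tendsto_dt_dx)
  then have "((\<lambda>h. second_difference f a b h / h\<^sup>2) \<longlongrightarrow> dx (dt f) (a, b)) (at_right 0)"
    by (simp add: second_difference_comp_swap dx_comp_swap dt_comp_swap)
  with second_difference_tendsto_dt_dx[OF assms(1-4)] show ?thesis
    using tendsto_unique[OF trivial_limit_at_right_real] by blast
qed

text \<open>Isabelle's \<open>sqrt\<close> is odd, \<open>sqrt (- x) = - sqrt x\<close>, so this holds on both sides of \<open>0\<close>;
  it is needed because \<open>dx \<phi>\<close> may be negative.\<close>
lemma DERIV_real_sqrt_nonzero:
  assumes "x \<noteq> 0"
  shows "DERIV sqrt x :> sqrt x / (2 * x)"
  by (rule DERIV_real_sqrt_generic[OF assms]) (simp_all add: field_simps)

lemma DERIV_ln_nonzero: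
  fixes x :: real
  assumes "x \<noteq> 0"
  shows "DERIV ln x :> 1 / x"
proof (cases "x > 0")
  case True
  then show ?thesis by (rule DERIV_ln_divide)
next
  case False
  then have "DERIV (\<lambda>y. ln (- y)) x :> 1 / x"
    using assms by (auto intro!: derivative_eq_intros simp: field_simps)
  then show ?thesis by (simp add: ln_minus)
qed

lemma ln_abs_real: "ln \<bar>x\<bar> = ln (x :: real)"
  by (cases "x \<ge> 0") (simp_all add: ln_minus)

lemma DERIV_sqrt_divide:
  fixes g c :: "real \<Rightarrow> real"
  assumes "(g has_real_derivative g') (at x)" and "(c has_real_derivative c') (at x)"
    and "g x \<noteq> 0" and "c x \<noteq> 0"
  shows "((\<lambda>y. sqrt (g y) / c y) has_real_derivative
           - (c' / c x - g' / (2 * g x)) * (sqrt (g x) / c x)) (at x)"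
  by (rule DERIV_cong[OF DERIV_divide[OF DERIV_chain2[OF DERIV_real_sqrt_nonzero assms(1)]
        assms(2,4)]])
    (use assms(3,4) in \<open>simp_all add: field_simps\<close>)

locale darboux_seed =
  fixes \<phi> :: "real \<times> real \<Rightarrow> real" and S :: "(real \<times> real) set" and A B :: real
  assumes smooth: "smooth_on S \<phi>"
    and dx_phi_nonzero: "\<And>z. z \<in> S \<Longrightarrow> dx \<phi> z \<noteq> 0"
    and affine_nonzero: "\<And>z. z \<in> S \<Longrightarrow> A * \<phi> z + B \<noteq> 0"
begin

definition affine_phi :: "real \<times> real \<Rightarrow> real"
  where "affine_phi z = A * \<phi> z + B"

definition inv_V :: "real \<times> real \<Rightarrow> real"
  where "inv_V z = sqrt (dx \<phi> z) / affine_phi z"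

definition log_V :: "real \<times> real \<Rightarrow> real"
  where "log_V z = ln \<bar>affine_phi z / sqrt (dx \<phi> z)\<bar>"

definition logV_x :: "real \<times> real \<Rightarrow> real"
  where "logV_x z = A * dx \<phi> z / affine_phi z - dx (dx \<phi>) z / (2 * dx \<phi> z)"

text \<open>\<open>q\<close> is \<open>\<lambda>\<close> times the function \<open>p\<close> of the paper.\<close>
definition q :: "real \<times> real \<Rightarrow> real"
  where "q z = dt \<phi> z / dx \<phi> z"

definition logV_t :: "real \<times> real \<Rightarrow> real"
  where "logV_t z = A * dt \<phi> z / affine_phi z - dt (dx \<phi>) z / (2 * dx \<phi> z)"

lemma open_S: "open S"
  using smooth by (simp add: smooth_on_def)

lemma pd_differentiable_on: "pd ws \<phi> differentiable_on S"
  using smooth by (simp add: smooth_on_def)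

lemma pd_differentiable: "z \<in> S \<Longrightarrow> pd ws \<phi> differentiable (at z)"
  using pd_differentiable_on open_S by (simp add: differentiable_on_eq_differentiable_at)

lemmas derivs_differentiable =
  pd_differentiable[of _ "[]"] pd_differentiable[of _ "[True]"]
  pd_differentiable[of _ "[True, True]"] pd_differentiable[of _ "[True, True, True]"]
  pd_differentiable[of _ "[False]"] pd_differentiable[of _ "[False, True]"]
  pd_differentiable[of _ "[False, True, True]"]

lemma dx_dt_phi:
  assumes "(a, b) \<in> S"
  shows "dx (dt \<phi>) (a, b) = dt (dx \<phi>) (a, b)"
  using dt_dx_eq_dx_dt[OF open_S assms pd_differentiable_on[of "[]"]]
    derivs_differentiable[OF assms] by simp

lemma affine_phi_nonzero: "z \<in> S \<Longrightarrow> affine_phi z \<noteq> 0"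
  by (simp add: affine_phi_def affine_nonzero)

lemma affine_phi_differentiable: "z \<in> S \<Longrightarrow> affine_phi differentiable (at z)"
  unfolding affine_phi_def[abs_def] using derivs_differentiable by (auto intro!: derivative_intros)

lemma x_line_derivatives:
  assumes "(a, b) \<in> S"
  shows "((\<lambda>y. affine_phi (y, b)) has_real_derivative A * dx \<phi> (a, b)) (at a)"
    and "((\<lambda>y. dx \<phi> (y, b)) has_real_derivative dx (dx \<phi>) (a, b)) (at a)"
    and "((\<lambda>y. dx (dx \<phi>) (y, b)) has_real_derivative dx (dx (dx \<phi>)) (a, b)) (at a)"
    and "((\<lambda>y. dt \<phi> (y, b)) has_real_derivative dt (dx \<phi>) (a, b)) (at a)"
  using differentiable_imp_x_line[OF derivs_differentiable(1)[OF assms, simplified]]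
    differentiable_imp_x_line[OF derivs_differentiable(2)[OF assms, simplified]]
    differentiable_imp_x_line[OF derivs_differentiable(3)[OF assms, simplified]]
    differentiable_imp_x_line[OF derivs_differentiable(5)[OF assms, simplified]]
    dx_dt_phi[OF assms] by (auto simp: affine_phi_def intro!: derivative_eq_intros)

lemma t_line_derivatives:
  assumes "(a, b) \<in> S"
  shows "((\<lambda>s. affine_phi (a, s)) has_real_derivative A * dt \<phi> (a, b)) (at b)"
    and "((\<lambda>s. dx \<phi> (a, s)) has_real_derivative dt (dx \<phi>) (a, b)) (at b)"
    and "((\<lambda>s. dx (dx \<phi>) (a, s)) has_real_derivative dt (dx (dx \<phi>)) (a, b)) (at b)"
  using differentiable_imp_t_line[OF derivs_differentiable(1)[OF assms, simplified]]
    differentiable_imp_t_line[OF derivs_differentiable(2)[OF assms, simplified]]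
    differentiable_imp_t_line[OF derivs_differentiable(3)[OF assms, simplified]]
  by (auto simp: affine_phi_def intro!: derivative_eq_intros)

lemma has_real_derivative_inv_V_x:
  assumes "(a, b) \<in> S"
  shows "((\<lambda>y. inv_V (y, b)) has_real_derivative - logV_x (a, b) * inv_V (a, b)) (at a)"
  using DERIV_sqrt_divide[OF x_line_derivatives(2,1)[OF assms] dx_phi_nonzero[OF assms]
      affine_phi_nonzero[OF assms]]
  by (simp add: inv_V_def[abs_def] logV_x_def)

lemma dx_inv_V: "(a, b) \<in> S \<Longrightarrow> dx inv_V (a, b) = - logV_x (a, b) * inv_V (a, b)"
  by (rule dx_eqI[OF has_real_derivative_inv_V_x])

lemma dt_inv_V:
  assumes "(a, b) \<in> S"
  shows "dt inv_V (a, b) = - logV_t (a, b) * inv_V (a, b)"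
  using DERIV_sqrt_divide[OF t_line_derivatives(2,1)[OF assms] dx_phi_nonzero[OF assms]
      affine_phi_nonzero[OF assms]]
  by (intro dt_eqI) (simp add: inv_V_def[abs_def] logV_t_def)

lemma inv_V_nonzero: "z \<in> S \<Longrightarrow> inv_V z \<noteq> 0"
  using dx_phi_nonzero affine_phi_nonzero by (simp add: inv_V_def)

text \<open>Isabelle's \<open>ln\<close> is totalised by \<open>ln (- x) = ln x\<close>, so no sign condition is needed here.\<close>
lemma log_V_eq: "log_V z = - ln (inv_V z)"
  unfolding log_V_def inv_V_def ln_abs_real by (simp add: ln_inverse[symmetric])

lemma dx_log_V:
  assumes "(a, b) \<in> S"
  shows "dx log_V (a, b) = logV_x (a, b)"
proof -
  have "((\<lambda>y. - ln (inv_V (y, b))) has_real_derivative logV_x (a, b)) (at a)"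
    by (rule DERIV_cong[OF DERIV_minus[OF DERIV_chain2[OF DERIV_ln_nonzero
        has_real_derivative_inv_V_x]]])
      (use assms inv_V_nonzero[OF assms] in simp_all)
  then show ?thesis unfolding log_V_eq[abs_def] by (rule dx_eqI)
qed

lemma logV_x_differentiable: "z \<in> S \<Longrightarrow> logV_x differentiable (at z)"
  unfolding logV_x_def[abs_def]
  using derivs_differentiable affine_phi_differentiable dx_phi_nonzero affine_phi_nonzero
  by (auto intro!: derivative_intros)

lemma schwarzian_differentiable: "z \<in> S \<Longrightarrow> schwarzian \<phi> differentiable (at z)"
  unfolding schwarzian_def
  using derivs_differentiable dx_phi_nonzero by (auto intro!: derivative_intros)

text \<open>This is the Moebius invariance of the Schwarzian, in the form \<open>V\<^sub>x\<^sub>x + {\<phi>;x} V / 2 = 0\<close>.\<close>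
lemma logV_x_riccati:
  assumes "(a, b) \<in> S"
  shows "dx logV_x (a, b) = - schwarzian \<phi> (a, b) / 2 - (logV_x (a, b))\<^sup>2"
  unfolding logV_x_def[abs_def]
  by (rule dx_eqI)
    (use dx_phi_nonzero[OF assms] affine_phi_nonzero[OF assms] in \<open>auto intro!: derivative_eq_intros
      x_line_derivatives[OF assms] simp: schwarzian_def field_simps power2_eq_square\<close>)

lemma dx_logV_x_differentiable:
  assumes "z \<in> S"
  shows "dx logV_x differentiable (at z)"
proof (rule differentiable_transform_open[OF open_S assms])
  show "(\<lambda>w. - schwarzian \<phi> w / 2 - (logV_x w)\<^sup>2) differentiable (at z)"
    using assms schwarzian_differentiable logV_x_differentiable by (auto intro!: derivative_intros)
  show "- schwarzian \<phi> w / 2 - (logV_x w)\<^sup>2 = dx logV_x w" if "w \<in> S" for w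
    using logV_x_riccati[of "fst w" "snd w"] that by simp
qed

lemma dt_logV_x_differentiable:
  assumes "z \<in> S"
  shows "dt logV_x differentiable (at z)"
proof (rule differentiable_transform_open[OF open_S assms])
  let ?f = "\<lambda>w. A * dt (dx \<phi>) w / affine_phi w - A * dx \<phi> w * (A * dt \<phi> w) / (affine_phi w)\<^sup>2
    - dt (dx (dx \<phi>)) w / (2 * dx \<phi> w) + dx (dx \<phi>) w * dt (dx \<phi>) w / (2 * (dx \<phi> w)\<^sup>2)"
  show "?f differentiable (at z)"
    using assms derivs_differentiable affine_phi_differentiable dx_phi_nonzero affine_phi_nonzero
    by (auto intro!: derivative_intros)
  show "?f w = dt logV_x w" if "w \<in> S" for w
  proof (cases w)
    case (Pair a b)
    show ?thesis unfolding Pair logV_x_def[abs_def]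
      by (intro dt_eqI[symmetric]) (use that Pair dx_phi_nonzero affine_phi_nonzero in
        \<open>auto intro!: derivative_eq_intros t_line_derivatives simp: field_simps power2_eq_square\<close>)
  qed
qed

lemma dx_dt_logV_x:
  assumes "(a, b) \<in> S"
  shows "dx (dt logV_x) (a, b)
           = - dt (schwarzian \<phi>) (a, b) / 2 - 2 * logV_x (a, b) * dt logV_x (a, b)"
proof -
  have "logV_x differentiable_on S"
    using logV_x_differentiable by (simp add: differentiable_at_imp_differentiable_on)
  then have "dx (dt logV_x) (a, b) = dt (dx logV_x) (a, b)"
    using dt_dx_eq_dx_dt[OF open_S assms] dx_logV_x_differentiable dt_logV_x_differentiable assms
    by simp
  also have "\<dots> = dt (\<lambda>w. - schwarzian \<phi> w / 2 - (logV_x w)\<^sup>2) (a, b)"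
    by (rule dt_cong_open[OF open_S assms]) (use logV_x_riccati in force)
  also have "\<dots> = - dt (schwarzian \<phi>) (a, b) / 2 - 2 * logV_x (a, b) * dt logV_x (a, b)"
    by (rule dt_eqI)
      (use assms in \<open>auto intro!: derivative_eq_intros differentiable_imp_t_line
        schwarzian_differentiable logV_x_differentiable\<close>)
  finally show ?thesis .
qed

lemma q_differentiable: "z \<in> S \<Longrightarrow> q differentiable (at z)"
  unfolding q_def[abs_def] using derivs_differentiable dx_phi_nonzero
  by (auto intro!: derivative_intros)

text \<open>\<open>V\<close> itself obeys the time flow \<open>V\<^sub>t = \<lambda> (p V\<^sub>x - p\<^sub>x V / 2)\<close>, with no use of the PDE.\<close>
lemma logV_t_eq:
  assumes "(a, b) \<in> S"
  shows "logV_t (a, b) = q (a, b) * logV_x (a, b) - dx q (a, b) / 2"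
proof -
  have qx: "dx q (a, b)
      = (dt (dx \<phi>) (a, b) * dx \<phi> (a, b) - dt \<phi> (a, b) * dx (dx \<phi>) (a, b)) / (dx \<phi> (a, b))\<^sup>2"
    unfolding q_def[abs_def] by (rule dx_eqI) (use dx_phi_nonzero[OF assms] in
      \<open>auto intro!: derivative_eq_intros x_line_derivatives[OF assms] simp: power2_eq_square\<close>)
  show ?thesis
    unfolding qx logV_t_def logV_x_def q_def
    using dx_phi_nonzero[OF assms] affine_phi_nonzero[OF assms]
    by (simp add: field_simps power2_eq_square)
qed

lemma inv_V_schroedinger:
  assumes "(a, b) \<in> S"
  shows "dx (dx inv_V) (a, b)
           + (schwarzian \<phi> (a, b) / 2 + 2 * dx (dx log_V) (a, b)) * inv_V (a, b) = 0"
proof -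
  have "dx (dx inv_V) (a, b) = dx (\<lambda>z. - logV_x z * inv_V z) (a, b)"
    by (rule dx_cong_open[OF open_S assms]) (use dx_inv_V in force)
  also have "\<dots> = ((logV_x (a, b))\<^sup>2 - dx logV_x (a, b)) * inv_V (a, b)"
    by (rule dx_eqI) (auto intro!: derivative_eq_intros has_real_derivative_inv_V_x[OF assms]
      differentiable_imp_x_line logV_x_differentiable[OF assms]
      simp: algebra_simps power2_eq_square)
  finally have inv_V_xx:
    "dx (dx inv_V) (a, b) = ((logV_x (a, b))\<^sup>2 - dx logV_x (a, b)) * inv_V (a, b)" .
  have log_V_xx: "dx (dx log_V) (a, b) = dx logV_x (a, b)"
    by (rule dx_cong_open[OF open_S assms]) (use dx_log_V in force)
  show ?thesis
    unfolding inv_V_xx log_V_xx logV_x_riccati[OF assms] by (simp add: algebra_simps)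
qed

lemma inv_V_time_evolution:
  assumes ab: "(a, b) \<in> S" and "lam \<noteq> 0"
    and pde: "dt (schwarzian \<phi>) (a, b) + 4 / lam * dx q (a, b) = 0"
    and p: "\<And>z. z \<in> S \<Longrightarrow> p z = dt \<phi> z / (lam * dx \<phi> z) - dt (dx log_V) z"
  shows "dt inv_V (a, b) = lam * (p (a, b) * dx inv_V (a, b) - 1/2 * dx p (a, b) * inv_V (a, b))"
proof -
  have p_eq: "p z = q z / lam - dt logV_x z" if "z \<in> S" for z
  proof (cases z)
    case (Pair x t)
    have "dt (dx log_V) (x, t) = dt logV_x (x, t)"
      by (rule dt_cong_open[OF open_S]) (use that Pair dx_log_V in force)+
    then show ?thesis using p[OF that] Pair by (simp add: q_def)
  qed
  have "dx p (a, b) = dx (\<lambda>z. q z / lam - dt logV_x z) (a, b)"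
    by (rule dx_cong_open[OF open_S ab]) (simp add: p_eq)
  also have "\<dots> = dx q (a, b) / lam - dx (dt logV_x) (a, b)"
    by (rule dx_eqI) (use \<open>lam \<noteq> 0\<close> in \<open>auto intro!: derivative_eq_intros
      differentiable_imp_x_line q_differentiable[OF ab] dt_logV_x_differentiable[OF ab]\<close>)
  finally have p_x: "dx p (a, b) = dx q (a, b) / lam - dx (dt logV_x) (a, b)" .
  have S_t: "dt (schwarzian \<phi>) (a, b) = - 4 / lam * dx q (a, b)"
    using pde by simp
  show ?thesis
    unfolding p_x p_eq[OF ab] dx_inv_V[OF ab] dt_inv_V[OF ab] logV_t_eq[OF ab]
      dx_dt_logV_x[OF ab] S_t
    using \<open>lam \<noteq> 0\<close> by (simp add: field_simps)
qed

end

theorem mainTheorem7: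
  fixes \<phi> :: "real \<times> real \<Rightarrow> real" and S :: "(real \<times> real) set"
    and lam A B :: real
  assumes smooth: "smooth_on S \<phi>"
    and lam: "lam \<noteq> 0"
    and phix: "\<forall>z\<in>S. dx \<phi> z \<noteq> 0"
    and pde: "\<forall>z\<in>S. dt (schwarzian \<phi>) z + 4 / lam * dx (\<lambda>w. dt \<phi> w / dx \<phi> w) z = 0"
    and AB: "A \<noteq> 0 \<or> B \<noteq> 0"
    and nz: "\<forall>z\<in>S. A * \<phi> z + B \<noteq> 0"
  defines "V \<equiv> (\<lambda>z. (A * \<phi> z + B) / sqrt (dx \<phi> z))"
    and "Ut \<equiv> (\<lambda>z. (1/2 * schwarzian \<phi> z + 1 / lam)
                  + 2 * dx (dx (\<lambda>w. ln \<bar>(A * \<phi> w + B) / sqrt (dx \<phi> w)\<bar>)) z)"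
    and "pt \<equiv> (\<lambda>z. dt \<phi> z / (lam * dx \<phi> z)
                  - dt (dx (\<lambda>w. ln \<bar>(A * \<phi> w + B) / sqrt (dx \<phi> w)\<bar>)) z)"
  shows "\<forall>z\<in>S. dx (dx (\<lambda>w. 1 / V w)) z + (Ut z - 1 / lam) * (1 / V z) = 0
            \<and> dt (\<lambda>w. 1 / V w) z
                = lam * (pt z * dx (\<lambda>w. 1 / V w) z - 1/2 * dx pt z * (1 / V z))"
proof
  fix z assume "z \<in> S"
  then obtain a b where z: "z = (a, b)" and ab: "(a, b) \<in> S" by (cases z) auto
  interpret darboux_seed \<phi> S A B
    using smooth phix nz by unfold_locales auto
  have inv_V: "1 / V w = inv_V w" for w
    by (simp add: V_def inv_V_def affine_phi_def)
  have log_V: "(\<lambda>w. ln \<bar>(A * \<phi> w + B) / sqrt (dx \<phi> w)\<bar>) = log_V"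
    by (simp add: fun_eq_iff log_V_def affine_phi_def)
  have "dt inv_V (a, b) = lam * (pt (a, b) * dx inv_V (a, b) - 1/2 * dx pt (a, b) * inv_V (a, b))"
  proof (rule inv_V_time_evolution[OF ab lam])
    show "dt (schwarzian \<phi>) (a, b) + 4 / lam * dx q (a, b) = 0"
      using pde ab by (simp add: q_def[abs_def])
    show "pt w = dt \<phi> w / (lam * dx \<phi> w) - dt (dx log_V) w" for w
      unfolding pt_def log_V ..
  qed
  moreover have "Ut z - 1 / lam = schwarzian \<phi> z / 2 + 2 * dx (dx log_V) z"
    unfolding Ut_def log_V by simp
  ultimately show "dx (dx (\<lambda>w. 1 / V w)) z + (Ut z - 1 / lam) * (1 / V z) = 0
            \<and> dt (\<lambda>w. 1 / V w) z
                = lam * (pt z * dx (\<lambda>w. 1 / V w) z - 1/2 * dx pt z * (1 / V z))"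
    using inv_V_schroedinger[OF ab] by (simp add: inv_V z)
qed

end
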